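(* Let $\alpha\in\mathbb C$, $\alpha\neq0$, and let $|\xi\rangle=\frac{a^\dagger|\alpha\rangle}{\sqrt{1+|\alpha|^2}}$ be the (normalized) photon-added coherent state, so that $\lambda_0=0$. Set $\beta=\alpha/\sqrt2$ and $|\psi^\perp\rangle=(a^\dagger-\beta^* )|\beta\rangle$ (a unit vector orthogonal to $|\beta\rangle$). Take Bob's measurement $\Pi^B_0=\sum_{m\ge0}|2m\rangle\langle2m|$, $\Pi^B_1=\sum_{m\ge0}|2m+1\rangle\langle2m+1|$, and any two-outcome projective measurement $\{\Pi^A_0,\Pi^A_1\}$ for Alice with $\Pi^A_1|\beta\rangle=|\beta\rangle$ and $\Pi^A_0|\psi^\perp\rangle=|\psi^\perp\rangle$. Then $P(0,0|0,0)=P(0,0|1,1)=\frac{1+e^{-|\alpha|^2}}{2(1+|\alpha|^2)}$, $P(1,1|0,1)=P(1,1|1,0)=\frac{1+2|\alpha|^2+e^{-|\alpha|^2}}{2(1+|\alpha|^2)}$, and therefore $\mathcal J=\frac12+\frac{e^{-|\alpha|^2}}{2(1+|\alpha|^2)}>\frac12$.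
   Context: Modes $A$ and $B$ have annihilation operators $a,b$ and Fock states $|n\rangle$; $|\gamma\rangle=e^{-|\gamma|^2/2}\sum_n\frac{\gamma^n}{\sqrt{n!}}|n\rangle$ is a coherent state. For a normalized single-mode state $|\xi\rangle=\sum_n\lambda_n|n\rangle$ with $|\lambda_0|<1$ and input bits $x,y\in\{0,1\}$, the phase-encoded generalized NOON state is $|\Phi_{xy}\rangle=\mathcal N_{xy}^{-1/2}\big((-1)^x|\xi\rangle_A|0\rangle_B+(-1)^y|0\rangle_A|\xi\rangle_B\big)$ with $\mathcal N_{xy}=2(1+(-1)^{x+y}|\lambda_0|^2)$. The lossless 50:50 beam splitter is the unitary $U$ with $U|0,0\rangle=|0,0\rangle$, $Ua^\dagger U^\dagger=(a^\dagger+b^\dagger)/\sqrt2$, $Ub^\dagger U^\dagger=(a^\dagger-b^\dagger)/\sqrt2$; set $|\Phi''_{xy}\rangle=U|\Phi_{xy}\rangle$. For two-outcome projective measurements $\{\Pi^A_0,\Pi^A_1\}$ on mode $A$, $\{\Pi^B_0,\Pi^B_1\}$ on mode $B$, $P(a,b|x,y)=\langle\Phi''_{xy}|\Pi^A_a\otimes\Pi^B_b|\Phi''_{xy}\rangle$ and $\mathcal J=\frac14\big[P(0,0|0,0)+P(0,0|1,1)+P(1,1|0,1)+P(1,1|1,0)\big]$. *)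

theory Defs
  imports "HOL-Analysis.Analysis"
begin

section \<open>Single-mode Fock space: vectors are coefficient sequences nat \<Rightarrow> complex\<close>

definition l2vec :: "(nat \<Rightarrow> complex) \<Rightarrow> bool" where
  "l2vec f \<longleftrightarrow> summable (\<lambda>n. (norm (f n))^2)"

definition vinner :: "(nat \<Rightarrow> complex) \<Rightarrow> (nat \<Rightarrow> complex) \<Rightarrow> complex" where
  "vinner f g = (\<Sum>n. cnj (f n) * g n)"

definition coh :: "complex \<Rightarrow> nat \<Rightarrow> complex" where
  "coh g n = complex_of_real (exp (- (norm g ^ 2) / 2)) * g ^ n
               / complex_of_real (sqrt (fact n))"

definition create :: "(nat \<Rightarrow> complex) \<Rightarrow> nat \<Rightarrow> complex" where
  "create f n = (if n = 0 then 0 else complex_of_real (sqrt (real n)) * f (n - 1))"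

definition photon_added :: "complex \<Rightarrow> nat \<Rightarrow> complex" where
  "photon_added \<alpha> n = create (coh \<alpha>) n / complex_of_real (sqrt (1 + (norm \<alpha>)^2))"

text \<open>Orthogonal projection on l2(N) (acting on l2 vectors; behaviour elsewhere irrelevant).\<close>
definition is_proj :: "((nat \<Rightarrow> complex) \<Rightarrow> (nat \<Rightarrow> complex)) \<Rightarrow> bool" where
  "is_proj P \<longleftrightarrow>
     (\<forall>f. l2vec f \<longrightarrow> l2vec (P f)) \<and>
     (\<forall>f g c. l2vec f \<longrightarrow> l2vec g \<longrightarrow> P (\<lambda>n. f n + c * g n) = (\<lambda>n. P f n + c * P g n)) \<and>
     (\<forall>f. l2vec f \<longrightarrow> P (P f) = P f) \<and>
     (\<forall>f g. l2vec f \<longrightarrow> l2vec g \<longrightarrow> vinner (P f) g = vinner f (P g))"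

definition two_outcome_pvm ::
  "((nat \<Rightarrow> complex) \<Rightarrow> (nat \<Rightarrow> complex)) \<Rightarrow> ((nat \<Rightarrow> complex) \<Rightarrow> (nat \<Rightarrow> complex)) \<Rightarrow> bool" where
  "two_outcome_pvm P0 P1 \<longleftrightarrow> is_proj P0 \<and> is_proj P1 \<and>
     (\<forall>f. l2vec f \<longrightarrow> (\<lambda>n. P0 f n + P1 f n) = f)"

definition parity_even :: "(nat \<Rightarrow> complex) \<Rightarrow> nat \<Rightarrow> complex" where
  "parity_even f n = (if even n then f n else 0)"
definition parity_odd :: "(nat \<Rightarrow> complex) \<Rightarrow> nat \<Rightarrow> complex" where
  "parity_odd f n = (if odd n then f n else 0)"

section \<open>Two-mode states: nat \<times> nat \<Rightarrow> complex (coefficient of |n>_A |m>_B)\<close>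

definition noon :: "(nat \<Rightarrow> complex) \<Rightarrow> nat \<Rightarrow> nat \<Rightarrow> nat \<times> nat \<Rightarrow> complex" where
  "noon lam x y = (\<lambda>(n, m).
     ((-1) ^ x * lam n * (if m = 0 then 1 else 0) + (-1) ^ y * (if n = 0 then 1 else 0) * lam m)
     / complex_of_real (sqrt (2 * (1 + (-1) ^ (x + y) * (norm (lam 0))^2))))"

text \<open>Matrix element <j,l| U |n,m> of the 50:50 beam splitter determined by
  U|0,0> = |0,0>, U a^dag U^dag = (a^dag+b^dag)/sqrt 2, U b^dag U^dag = (a^dag-b^dag)/sqrt 2, i.e.
  U|n,m> = (a^dag+b^dag)^n (a^dag-b^dag)^m |0,0> / sqrt(n! m! 2^(n+m)).\<close>
definition bs_coeff :: "nat \<Rightarrow> nat \<Rightarrow> nat \<Rightarrow> nat \<Rightarrow> real" where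
  "bs_coeff j l n m =
     (if j + l = n + m then
        (\<Sum>k = 0..n. if k \<le> j \<and> j - k \<le> m then
             real (n choose k) * real (m choose (j - k)) * (-1) ^ (m - (j - k)) else 0)
        * sqrt (fact j * fact l / (fact n * fact m * 2 ^ (n + m)))
      else 0)"

definition beam_splitter :: "(nat \<times> nat \<Rightarrow> complex) \<Rightarrow> nat \<times> nat \<Rightarrow> complex" where
  "beam_splitter \<psi> = (\<lambda>(j, l). \<Sum>n = 0..j + l. complex_of_real (bs_coeff j l n (j + l - n)) * \<psi> (n, j + l - n))"

definition apply_local ::
  "((nat \<Rightarrow> complex) \<Rightarrow> (nat \<Rightarrow> complex)) \<Rightarrow> ((nat \<Rightarrow> complex) \<Rightarrow> (nat \<Rightarrow> complex))
   \<Rightarrow> (nat \<times> nat \<Rightarrow> complex) \<Rightarrow> nat \<times> nat \<Rightarrow> complex" where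
  "apply_local PA PB \<psi> =
     (let \<psi>1 = (\<lambda>(n, m). PA (\<lambda>n'. \<psi> (n', m)) n) in (\<lambda>(n, m). PB (\<lambda>m'. \<psi>1 (n, m')) m))"

definition prob ::
  "((nat \<Rightarrow> complex) \<Rightarrow> (nat \<Rightarrow> complex)) \<Rightarrow> ((nat \<Rightarrow> complex) \<Rightarrow> (nat \<Rightarrow> complex))
   \<Rightarrow> (nat \<Rightarrow> complex) \<Rightarrow> nat \<Rightarrow> nat \<Rightarrow> complex" where
  "prob PA PB lam x y =
     (let \<Phi> = beam_splitter (noon lam x y) in
       infsum (\<lambda>p. cnj (\<Phi> p) * apply_local PA PB \<Phi> p) UNIV)"

definition J_val ::
  "((nat \<Rightarrow> complex) \<Rightarrow> (nat \<Rightarrow> complex)) \<Rightarrow> ((nat \<Rightarrow> complex) \<Rightarrow> (nat \<Rightarrow> complex))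
   \<Rightarrow> ((nat \<Rightarrow> complex) \<Rightarrow> (nat \<Rightarrow> complex)) \<Rightarrow> ((nat \<Rightarrow> complex) \<Rightarrow> (nat \<Rightarrow> complex))
   \<Rightarrow> (nat \<Rightarrow> complex) \<Rightarrow> complex" where
  "J_val PA0 PA1 PB0 PB1 lam =
     (prob PA0 PB0 lam 0 0 + prob PA0 PB0 lam 1 1 + prob PA1 PB1 lam 0 1 + prob PA1 PB1 lam 1 0) / 4"

end

theory Submission
  imports Defs
begin

text \<open>
  With \<open>\<beta> = \<alpha>/\<surd>2\<close>, the beam splitter sends \<open>|\<alpha>\<rangle>|0\<rangle>\<close> to \<open>|\<beta>\<rangle>|\<beta>\<rangle>\<close>, so the photon-added
  NOON state leaves it with coefficients \<open>((-1)\<^sup>x + (-1)\<^sup>y\<^sup>+\<^sup>l) (j + l)/\<beta> \<langle>j|\<beta>\<rangle>\<langle>l|\<beta>\<rangle>\<close>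
  (up to normalisation). Since \<open>a\<^sup>\<dagger>|\<beta>\<rangle> = |\<psi>\<^sup>\<perp>\<rangle> + \<beta>\<^sup>*|\<beta>\<rangle>\<close>, mode A splits along the orthonormal
  pair \<open>|\<psi>\<^sup>\<perp>\<rangle>, |\<beta>\<rangle>\<close>, with mode-B amplitudes \<open>c\<^sub>l\<close> and \<open>c\<^sub>l (|\<beta>|\<^sup>2 + l)/\<beta>\<close>. The sign factor kills
  every \<open>l\<close> of the wrong parity, so Bob's parity measurement is harmless, and Alice's projectors
  just pick one of the two components. Each probability is thus an exponential series
  \<open>\<Sum>\<^sub>l (1 \<plusminus> (-1)\<^sup>l) p(l) |\<beta>|\<^sup>2\<^sup>l/l!\<close> with \<open>p\<close> a polynomial of degree at most two.
\<close>

lemma sums_quadratic_exp_series: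
  fixes w c0 c1 c2 :: real
  shows "(\<lambda>n. (c0 + c1 * real n + c2 * real n ^ 2) * w ^ n / fact n)
           sums ((c0 + c1 * w + c2 * (w\<^sup>2 + w)) * exp w)"
proof -
  have exp: "(\<lambda>n. w ^ n / fact n) sums exp w"
    using exp_converges[of w] by (simp add: divide_inverse mult.commute)
  have lin: "(\<lambda>n. real n * w ^ n / fact n) sums (w * exp w)"
  proof -
    have "(\<lambda>n. real (Suc n) * w ^ Suc n / fact (Suc n)) = (\<lambda>n. w * (w ^ n / fact n))"
      by (rule ext) (simp add: field_simps del: of_nat_Suc)
    thus ?thesis
      using sums_mult[OF exp, of w] sums_Suc_iff[of "\<lambda>n. real n * w ^ n / fact n"] by simp
  qed
  have sq: "(\<lambda>n. real n ^ 2 * w ^ n / fact n) sums (w * (w * exp w + exp w))"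
  proof -
    have "real (Suc n) ^ 2 * w ^ Suc n / fact (Suc n) = w * (real n * w ^ n / fact n + w ^ n / fact n)"
      for n
    proof -
      have "real (Suc n) ^ 2 * w ^ Suc n / fact (Suc n)
          = real (Suc n) * (real (Suc n) * w * w ^ n) / (real (Suc n) * fact n)"
        by (simp add: power2_eq_square mult.assoc del: of_nat_Suc)
      also have "\<dots> = real (Suc n) * w * w ^ n / fact n"
        by (rule mult_divide_mult_cancel_left) simp
      finally show ?thesis by (simp add: field_simps)
    qed
    thus ?thesis
      using sums_mult[OF sums_add[OF lin exp], of w] sums_Suc_iff[of "\<lambda>n. real n ^ 2 * w ^ n / fact n"]
      by simp
  qed
  have "(\<lambda>n. c0 * (w ^ n / fact n) + c1 * (real n * w ^ n / fact n) + c2 * (real n ^ 2 * w ^ n / fact n))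
          sums (c0 * exp w + c1 * (w * exp w) + c2 * (w * (w * exp w + exp w)))"
    by (intro sums_add sums_mult exp lin sq)
  thus ?thesis
    by (simp add: field_simps power2_eq_square)
qed

lemma has_sum_quadratic_exp_series:
  fixes w c0 c1 c2 :: real
  shows "((\<lambda>n. complex_of_real ((c0 + c1 * real n + c2 * real n ^ 2) * w ^ n / fact n))
           has_sum complex_of_real ((c0 + c1 * w + c2 * (w\<^sup>2 + w)) * exp w)) UNIV"
proof (rule norm_summable_imp_has_sum)
  have "norm (norm (complex_of_real ((c0 + c1 * real n + c2 * real n ^ 2) * w ^ n / fact n)))
          \<le> (\<bar>c0\<bar> + \<bar>c1\<bar> * real n + \<bar>c2\<bar> * real n ^ 2) * \<bar>w\<bar> ^ n / fact n" for n
  proof -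
    have "\<bar>c0 + c1 * real n + c2 * real n ^ 2\<bar> \<le> \<bar>c0\<bar> + \<bar>c1\<bar> * real n + \<bar>c2\<bar> * real n ^ 2"
      by (auto simp: abs_mult intro!: order.trans[OF abs_triangle_ineq] add_mono)
    hence "\<bar>c0 + c1 * real n + c2 * real n ^ 2\<bar> * \<bar>w\<bar> ^ n / fact n
             \<le> (\<bar>c0\<bar> + \<bar>c1\<bar> * real n + \<bar>c2\<bar> * real n ^ 2) * \<bar>w\<bar> ^ n / fact n"
      by (intro divide_right_mono mult_right_mono) auto
    thus ?thesis
      unfolding real_norm_def norm_of_real abs_abs by (simp add: abs_mult power_abs)
  qed
  thus "summable (\<lambda>n. norm (complex_of_real ((c0 + c1 * real n + c2 * real n ^ 2) * w ^ n / fact n)))"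
    by (intro summable_comparison_test[OF _ sums_summable[OF sums_quadratic_exp_series]]) blast
  show "(\<lambda>n. complex_of_real ((c0 + c1 * real n + c2 * real n ^ 2) * w ^ n / fact n))
          sums complex_of_real ((c0 + c1 * w + c2 * (w\<^sup>2 + w)) * exp w)"
    using sums_of_real[OF sums_quadratic_exp_series] .
qed

lemma has_sum_parity_quadratic_exp_series:
  fixes w s c0 c1 c2 :: real
  shows "((\<lambda>n. complex_of_real ((1 + s * (-1) ^ n) * ((c0 + c1 * real n + c2 * real n ^ 2) * w ^ n / fact n)))
           has_sum complex_of_real ((c0 + c1 * w + c2 * (w\<^sup>2 + w)) * exp w
                                    + s * ((c0 - c1 * w + c2 * (w\<^sup>2 - w)) * exp (- w)))) UNIV"
proof -
  have "((\<lambda>n. complex_of_real ((c0 + c1 * real n + c2 * real n ^ 2) * w ^ n / fact n)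
            + of_real s * of_real ((c0 + c1 * real n + c2 * real n ^ 2) * (- w) ^ n / fact n))
         has_sum (of_real ((c0 + c1 * w + c2 * (w\<^sup>2 + w)) * exp w)
                  + of_real s * of_real ((c0 + c1 * (- w) + c2 * ((- w)\<^sup>2 + - w)) * exp (- w)))) UNIV"
    by (intro has_sum_add has_sum_cmult_right has_sum_quadratic_exp_series)
  thus ?thesis
    by (simp add: power_minus[of w] algebra_simps add_divide_distrib flip: of_real_mult of_real_add)
qed

lemma has_sum_parity_shifted_square_exp_series:
  fixes r s :: real
  assumes "r > 0"
  shows "((\<lambda>n. complex_of_real ((1 + s * (-1) ^ n) * ((r + real n)\<^sup>2 / r * r ^ n / fact n)))
           has_sum complex_of_real ((1 + 4 * r) * exp r - s * exp (- r))) UNIV"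
proof -
  have "(r + real n)\<^sup>2 / r = r + 2 * real n + 1 / r * real n ^ 2" for n
    using assms by (simp add: field_simps power2_eq_square)
  moreover have "r + 2 * r + 1 / r * (r\<^sup>2 + r) = 1 + 4 * r" "r - 2 * r + 1 / r * (r\<^sup>2 - r) = -1"
    using assms by (simp_all add: field_simps power2_eq_square)
  ultimately show ?thesis
    using has_sum_parity_quadratic_exp_series[of s r 2 "1 / r" r] by (simp add: add.commute)
qed

lemma has_sum_product:
  fixes f g :: "'a \<Rightarrow> complex"
  assumes "countable A" "countable B" "(f has_sum a) A" "(g has_sum b) B"
  shows "((\<lambda>(x, y). f x * g y) has_sum a * b) (A \<times> B)"
proof -
  have "f summable_on A" "g summable_on B"
    using assms(3,4) has_sum_imp_summable by blast+
  hence "Infinite_Set_Sum.abs_summable_on (\<lambda>(x, y). f x * g y) (A \<times> B)"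
    using assms(1,2) abs_summable_on_product[of A B f g]
    by (simp add: abs_summable_equivalent[symmetric] summable_on_iff_abs_summable_on_complex[symmetric])
  hence "(\<lambda>(x, y). f x * g y) summable_on A \<times> B"
    by (simp add: abs_summable_equivalent[symmetric] summable_on_iff_abs_summable_on_complex)
  moreover have "((\<lambda>y. f x * g y) has_sum f x * b) B" for x
    using assms(4) by (rule has_sum_cmult_right)
  moreover have "((\<lambda>x. f x * b) has_sum a * b) A"
    using assms(3) by (rule has_sum_cmult_left)
  ultimately show ?thesis
    using has_sum_SigmaI[of A "\<lambda>(x, y). f x * g y" "\<lambda>_. B" "\<lambda>x. f x * b" "a * b"] by simp
qed

lemma l2vec_if_has_sum_norm:
  assumes "((\<lambda>n. cnj (f n) * f n) has_sum s) UNIV"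
  shows "l2vec f"
proof -
  have "(\<lambda>n. norm (cnj (f n) * f n)) summable_on UNIV"
    using assms has_sum_imp_summable summable_on_iff_abs_summable_on_complex[of "\<lambda>n. cnj (f n) * f n" UNIV]
    by blast
  hence "summable (\<lambda>n. norm (cnj (f n) * f n))"
    by (rule summable_on_imp_summable)
  thus ?thesis
    unfolding l2vec_def by (simp add: norm_mult power2_eq_square)
qed

lemma is_proj_zero:
  assumes "is_proj P"
  shows "P (\<lambda>_. 0) = (\<lambda>_. 0)"
proof -
  have "l2vec (\<lambda>_. 0)"
    by (simp add: l2vec_def)
  hence "P (\<lambda>n. 0 + 1 * 0) = (\<lambda>n. P (\<lambda>_. 0) n + 1 * P (\<lambda>_. 0) n)"
    using assms unfolding is_proj_def by blast
  thus ?thesis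
    by (metis add_cancel_left_right mult_1)
qed

lemma is_proj_linear_combination:
  assumes "is_proj P" "l2vec f" "l2vec g"
  shows "P (\<lambda>n. a * f n + b * g n) = (\<lambda>n. a * P f n + b * P g n)"
proof -
  have add: "\<And>f g c. l2vec f \<Longrightarrow> l2vec g \<Longrightarrow> P (\<lambda>n. f n + c * g n) = (\<lambda>n. P f n + c * P g n)"
    using assms(1) unfolding is_proj_def by blast
  have "l2vec (\<lambda>_. 0)" "l2vec (\<lambda>n. a * f n)"
    using assms(2) by (auto simp: l2vec_def norm_mult power_mult_distrib summable_mult)
  hence "P (\<lambda>n. a * f n) = (\<lambda>n. a * P f n)"
    using add[of "\<lambda>_. 0" f a] assms(2) is_proj_zero[OF assms(1)] by simp
  thus ?thesis
    using add[OF \<open>l2vec (\<lambda>n. a * f n)\<close> assms(3)] by simp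
qed

lemma two_outcome_pvm_complement:
  assumes "two_outcome_pvm P0 P1" "l2vec f"
  shows "P1 f = f \<Longrightarrow> P0 f = (\<lambda>_. 0)" and "P0 f = f \<Longrightarrow> P1 f = (\<lambda>_. 0)"
proof -
  have "(\<lambda>n. P0 f n + P1 f n) = f"
    using assms unfolding two_outcome_pvm_def by blast
  thus "P1 f = f \<Longrightarrow> P0 f = (\<lambda>_. 0)" and "P0 f = f \<Longrightarrow> P1 f = (\<lambda>_. 0)"
    by (metis add_cancel_left_left add_cancel_right_right)+
qed

lemma create_coh:
  assumes "g \<noteq> 0"
  shows "create (coh g) n = of_nat n / g * coh g n"
proof (cases n)
  case (Suc m)
  have "sqrt (fact (Suc m)) = sqrt (real (Suc m)) * sqrt (fact m)"
    by (simp only: fact_Suc of_nat_mult real_sqrt_mult)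
  moreover have "(of_nat (Suc m) :: complex) = of_real (sqrt (real (Suc m))) * of_real (sqrt (real (Suc m)))"
    by (simp only: of_real_mult[symmetric] real_sqrt_mult_self of_real_of_nat_eq abs_of_nat)
  moreover have "sqrt (real (Suc m)) \<noteq> 0" "sqrt (fact m) \<noteq> 0"
    by auto
  ultimately show ?thesis
    using assms unfolding Suc create_def coh_def by (simp add: field_simps del: of_nat_Suc)
qed (simp add: create_def)

lemma cnj_coh_mult_coh:
  "cnj (coh g n) * coh g n = of_real (exp (- (norm g ^ 2)) * (norm g ^ 2) ^ n / fact n)"
proof -
  have "cnj (coh g n) * coh g n
          = of_real (exp (- (norm g ^ 2) / 2) * exp (- (norm g ^ 2) / 2)) * (cnj g * g) ^ n
            / of_real (fact n)"
    unfolding coh_def by (simp add: power_mult_distrib flip: of_real_mult)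
  also have "cnj g * g = of_real (norm g ^ 2)"
    by (metis complex_norm_square mult.commute)
  finally show ?thesis
    by (simp flip: exp_add)
qed

lemma has_sum_coh_norm: "((\<lambda>n. cnj (coh g n) * coh g n) has_sum 1) UNIV"
  using has_sum_quadratic_exp_series[of "exp (- (norm g ^ 2))" 0 0 "norm g ^ 2"]
  by (simp add: cnj_coh_mult_coh flip: exp_add)

definition coh_perp :: "complex \<Rightarrow> nat \<Rightarrow> complex" where
  "coh_perp g = (\<lambda>n. create (coh g) n - cnj g * coh g n)"

lemma coh_perp_eq:
  assumes "g \<noteq> 0"
  shows "coh_perp g n = (of_nat n - of_real (norm g ^ 2)) / g * coh g n"
proof -
  have "cnj g = of_real (norm g ^ 2) / g"
    using assms by (metis complex_norm_square nonzero_mult_div_cancel_left)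
  thus ?thesis
    unfolding coh_perp_def create_coh[OF assms] by (simp add: diff_divide_distrib algebra_simps)
qed

lemma has_sum_coh_perp_norm:
  assumes "g \<noteq> 0"
  shows "((\<lambda>n. cnj (coh_perp g n) * coh_perp g n) has_sum 1) UNIV"
proof -
  define r where "r = norm g ^ 2"
  have r: "r > 0"
    using assms unfolding r_def by simp
  have gg: "cnj g * g = of_real r"
    unfolding r_def by (metis complex_norm_square mult.commute)
  have "cnj (coh_perp g n) * coh_perp g n
          = of_real ((exp (- r) * r - 2 * exp (- r) * real n + exp (- r) / r * real n ^ 2) * r ^ n / fact n)"
    for n
  proof -
    have "cnj (coh_perp g n) * coh_perp g n
            = of_real ((real n - r)\<^sup>2 / r) * (cnj (coh g n) * coh g n)"
      unfolding coh_perp_eq[OF assms] r_def[symmetric] using gg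
      by (simp add: field_simps power2_eq_square)
    also have "\<dots> = of_real ((real n - r)\<^sup>2 / r * (exp (- r) * r ^ n / fact n))"
      unfolding cnj_coh_mult_coh r_def[symmetric] by simp
    finally show ?thesis
      using r by (simp add: field_simps power2_eq_square)
  qed
  moreover have "(exp (- r) * r - 2 * exp (- r) * r + exp (- r) / r * (r\<^sup>2 + r)) * exp r = 1"
    using r by (simp add: field_simps power2_eq_square flip: exp_add)
  ultimately show ?thesis
    using has_sum_quadratic_exp_series[of "exp (- r) * r" "- 2 * exp (- r)" "exp (- r) / r" r]
    by simp
qed

lemma has_sum_coh_coh_perp:
  assumes "g \<noteq> 0"
  shows "((\<lambda>n. cnj (coh g n) * coh_perp g n) has_sum 0) UNIV"
proof -
  define r where "r = norm g ^ 2"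
  have "cnj (coh g n) * coh_perp g n
          = 1 / g * of_real ((- exp (- r) * r + exp (- r) * real n + 0 * real n ^ 2) * r ^ n / fact n)"
    for n
  proof -
    have "cnj (coh g n) * coh_perp g n = 1 / g * of_real (real n - r) * (cnj (coh g n) * coh g n)"
      unfolding coh_perp_eq[OF assms] r_def by simp
    also have "\<dots> = 1 / g * of_real ((real n - r) * (exp (- r) * r ^ n / fact n))"
      unfolding cnj_coh_mult_coh r_def[symmetric] by simp
    finally show ?thesis
      by (simp add: field_simps)
  qed
  thus ?thesis
    using has_sum_cmult_right[OF has_sum_quadratic_exp_series[of "- exp (- r) * r" "exp (- r)" 0 r],
        of "1 / g"]
    by simp
qed

lemma has_sum_coh_perp_coh:
  assumes "g \<noteq> 0"
  shows "((\<lambda>n. cnj (coh_perp g n) * coh g n) has_sum 0) UNIV"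
  using has_sum_cnj_iff[THEN iffD2, OF has_sum_coh_coh_perp[OF assms]] by (simp add: mult.commute)

lemma bs_coeff_transmitted:
  "bs_coeff j l (j + l) 0 = real ((j + l) choose j) * sqrt (fact j * fact l / (fact (j + l) * 2 ^ (j + l)))"
proof -
  have "(\<Sum>k = 0..j + l. if k \<le> j \<and> j - k \<le> 0
            then real ((j + l) choose k) * real (0 choose (j - k)) * (-1) ^ (0 - (j - k)) else 0)
          = (\<Sum>k = 0..j + l. if k = j then real ((j + l) choose j) else 0)"
    by (rule sum.cong) auto
  thus ?thesis
    unfolding bs_coeff_def by simp
qed

lemma bs_coeff_reflected: "bs_coeff j l 0 (j + l) = (-1) ^ l * bs_coeff j l (j + l) 0"
  unfolding bs_coeff_transmitted by (simp add: bs_coeff_def)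

lemma bs_coeff_coh:
  "of_real (bs_coeff j l (j + l) 0) * coh \<alpha> (j + l)
     = coh (\<alpha> / of_real (sqrt 2)) j * coh (\<alpha> / of_real (sqrt 2)) l"
proof -
  define a b c where "a = sqrt (fact j :: real)" and "b = sqrt (fact l :: real)"
    and "c = sqrt (fact (j + l) :: real)"
  have abc: "a > 0" "b > 0" "c > 0" "a * a = fact j" "b * b = fact l" "c * c = fact (j + l)"
    unfolding a_def b_def c_def by auto
  have "real ((j + l) choose j) = fact (j + l) / (fact j * fact l)"
    using binomial_fact[of j "j + l", where 'a = real] by simp
  moreover have "sqrt (fact j * fact l / (fact (j + l) * 2 ^ (j + l))) = a * b / (c * sqrt 2 ^ (j + l))"
    unfolding a_def b_def c_def by (simp add: real_sqrt_mult real_sqrt_divide real_sqrt_power)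
  ultimately have "bs_coeff j l (j + l) 0 = (c * c) / ((a * a) * (b * b)) * (a * b / (c * sqrt 2 ^ (j + l)))"
    unfolding bs_coeff_transmitted abc(4-6) by simp
  hence "bs_coeff j l (j + l) 0 = c / (sqrt 2 ^ (j + l) * a * b)"
    using abc(1-3) by (simp add: field_simps)
  hence "of_real (bs_coeff j l (j + l) 0) * coh \<alpha> (j + l)
           = of_real (exp (- (norm \<alpha>)\<^sup>2 / 2)) * \<alpha> ^ (j + l) / (of_real (sqrt 2) ^ (j + l) * of_real a * of_real b)"
    using abc(3) unfolding coh_def c_def[symmetric] by (simp add: field_simps)
  also have "exp (- (norm \<alpha>)\<^sup>2 / 2)
               = exp (- (norm (\<alpha> / of_real (sqrt 2)))\<^sup>2 / 2) * exp (- (norm (\<alpha> / of_real (sqrt 2)))\<^sup>2 / 2)"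
    by (simp add: norm_divide power_divide flip: exp_add)
  finally show ?thesis
    unfolding coh_def a_def[symmetric] b_def[symmetric] by (simp add: power_add power_divide field_simps)
qed

lemma beam_splitter_noon:
  assumes "lam 0 = 0"
  shows "beam_splitter (noon lam x y) (j, l)
           = of_real (((-1) ^ x + (-1) ^ (y + l)) * bs_coeff j l (j + l) 0 / sqrt 2) * lam (j + l)"
proof -
  define N where "N = j + l"
  have "beam_splitter (noon lam x y) (j, l)
          = (\<Sum>n = 0..N. of_real (bs_coeff j l n (N - n)) * noon lam x y (n, N - n))"
    by (simp add: beam_splitter_def N_def)
  also have "\<dots> = (\<Sum>n = 0..N. of_real (bs_coeff j l n (N - n))
                 * (((if n = N then (-1) ^ x * lam N else 0) + (if n = 0 then (-1) ^ y * lam N else 0))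
                    / of_real (sqrt 2)))"
    using assms by (intro sum.cong) (auto simp: noon_def)
  also have "\<dots> = (\<Sum>n = 0..N. if n = N then of_real (bs_coeff j l N 0) * (-1) ^ x * lam N / of_real (sqrt 2) else 0)
                   + (\<Sum>n = 0..N. if n = 0 then of_real (bs_coeff j l 0 N) * (-1) ^ y * lam N / of_real (sqrt 2) else 0)"
    unfolding sum.distrib[symmetric] by (intro sum.cong) (auto simp: add_divide_distrib distrib_left mult.assoc)
  also have "\<dots> = (of_real (bs_coeff j l N 0) * (-1) ^ x + of_real (bs_coeff j l 0 N) * (-1) ^ y)
                   * lam N / of_real (sqrt 2)"
    by (simp add: add_divide_distrib distrib_right)
  finally show ?thesis
    unfolding N_def bs_coeff_reflected by (simp add: power_add algebra_simps)
qed

definition bob_amp :: "complex \<Rightarrow> nat \<Rightarrow> nat \<Rightarrow> nat \<Rightarrow> complex" where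
  "bob_amp \<alpha> x y l = of_real (((-1) ^ x + (-1) ^ (y + l)) / (2 * sqrt (1 + (norm \<alpha>)\<^sup>2)))
                       * coh (\<alpha> / of_real (sqrt 2)) l"

definition coh_amp :: "complex \<Rightarrow> nat \<Rightarrow> nat \<Rightarrow> nat \<Rightarrow> complex" where
  "coh_amp \<alpha> x y l = bob_amp \<alpha> x y l * ((of_real ((norm (\<alpha> / of_real (sqrt 2)))\<^sup>2) + of_nat l)
                                          / (\<alpha> / of_real (sqrt 2)))"

lemma beam_splitter_noon_photon_added:
  assumes "\<alpha> \<noteq> 0"
  defines "\<beta> \<equiv> \<alpha> / of_real (sqrt 2)"
  shows "beam_splitter (noon (photon_added \<alpha>) x y) (j, l)
           = bob_amp \<alpha> x y l * coh_perp \<beta> j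
             + coh_amp \<alpha> x y l * coh \<beta> j"
proof -
  define s where "s = ((-1) ^ x + (-1) ^ (y + l) :: real)"
  define K where "K = sqrt (1 + (norm \<alpha>)\<^sup>2)"
  have "\<beta> \<noteq> 0"
    using assms(1) unfolding \<beta>_def by simp
  have "s / sqrt 2 = s / 2 * sqrt 2"
    by (simp add: field_simps)
  hence sqrt2: "complex_of_real (s / sqrt 2) = of_real (s / 2) * of_real (sqrt 2)"
    by (simp only: of_real_mult[symmetric])
  have "K > 0"
    unfolding K_def by (simp add: add_pos_nonneg)
  have split: "of_nat (j + l) / \<beta> * coh \<beta> j
                 = coh_perp \<beta> j + (of_real ((norm \<beta>)\<^sup>2) + of_nat l) / \<beta> * coh \<beta> j"
    unfolding coh_perp_eq[OF \<open>\<beta> \<noteq> 0\<close>] using \<open>\<beta> \<noteq> 0\<close> by (simp add: field_simps)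
  have bob: "bob_amp \<alpha> x y l = of_real (s / (2 * K)) * coh \<beta> l"
    unfolding bob_amp_def s_def K_def \<beta>_def ..
  have "photon_added \<alpha> 0 = 0"
    by (simp add: photon_added_def create_def)
  hence "beam_splitter (noon (photon_added \<alpha>) x y) (j, l)
           = of_real (s / sqrt 2) * (of_nat (j + l) / \<alpha> / of_real K)
             * (of_real (bs_coeff j l (j + l) 0) * coh \<alpha> (j + l))"
    unfolding beam_splitter_noon[of "photon_added \<alpha>", OF \<open>photon_added \<alpha> 0 = 0\<close>] photon_added_def
      create_coh[OF assms(1)] s_def K_def
    by (simp add: field_simps)
  also have "\<dots> = of_real (s / (2 * K)) * coh \<beta> l * (of_nat (j + l) / \<beta> * coh \<beta> j)"
    unfolding bs_coeff_coh \<beta>_def[symmetric]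
    using \<open>K > 0\<close> assms(1) unfolding sqrt2 by (simp add: \<beta>_def field_simps)
  also have "\<dots> = bob_amp \<alpha> x y l * coh_perp \<beta> j
                   + bob_amp \<alpha> x y l * ((of_real ((norm \<beta>)\<^sup>2) + of_nat l) / \<beta>) * coh \<beta> j"
    unfolding split bob by (simp only: distrib_left mult_ac)
  finally show ?thesis
    unfolding coh_amp_def \<beta>_def by (simp only: mult.assoc)
qed

lemma cnj_bob_amp_mult_bob_amp:
  "cnj (bob_amp \<alpha> x y l) * bob_amp \<alpha> x y l
     = of_real ((1 + (-1) ^ (x + y) * (-1) ^ l) * (exp (- (norm \<alpha>)\<^sup>2 / 2) / (2 * (1 + (norm \<alpha>)\<^sup>2)))
                * ((norm \<alpha>)\<^sup>2 / 2) ^ l / fact l)"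
proof -
  define s where "s = ((-1) ^ x + (-1) ^ (y + l) :: real)"
  define c where "c = s / (2 * sqrt (1 + (norm \<alpha>)\<^sup>2))"
  have "s * s = 2 * (1 + (-1) ^ (x + y) * (-1) ^ l)"
    unfolding s_def by (simp add: algebra_simps power_add flip: power_add power_mult_distrib)
  moreover have "1 + (norm \<alpha>)\<^sup>2 > 0"
    by (simp add: add_pos_nonneg)
  ultimately have c: "c * c = (1 + (-1) ^ (x + y) * (-1) ^ l) / (2 * (1 + (norm \<alpha>)\<^sup>2))"
    unfolding c_def by (simp add: field_simps)
  have "cnj (bob_amp \<alpha> x y l) * bob_amp \<alpha> x y l
          = of_real (c * c) * (cnj (coh (\<alpha> / of_real (sqrt 2)) l) * coh (\<alpha> / of_real (sqrt 2)) l)"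
    unfolding bob_amp_def s_def[symmetric] c_def[symmetric] by (simp add: mult_ac)
  also have "\<dots> = of_real (c * c * (exp (- (norm \<alpha>)\<^sup>2 / 2) * ((norm \<alpha>)\<^sup>2 / 2) ^ l / fact l))"
    unfolding cnj_coh_mult_coh by (simp add: norm_divide power_divide)
  finally show ?thesis
    unfolding c by simp
qed

lemma has_sum_bob_amp_norm:
  "((\<lambda>l. cnj (bob_amp \<alpha> x y l) * bob_amp \<alpha> x y l)
      has_sum of_real ((1 + (-1) ^ (x + y) * exp (- (norm \<alpha>)\<^sup>2)) / (2 * (1 + (norm \<alpha>)\<^sup>2)))) UNIV"
proof -
  define a where "a = (norm \<alpha>)\<^sup>2"
  define \<kappa> where "\<kappa> = exp (- a / 2) / (2 * (1 + a))"
  have "a \<ge> 0"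
    unfolding a_def by simp
  have "(\<kappa> + 0 * (a / 2) + 0 * ((a / 2)\<^sup>2 + a / 2)) * exp (a / 2)
          + (-1) ^ (x + y) * ((\<kappa> - 0 * (a / 2) + 0 * ((a / 2)\<^sup>2 - a / 2)) * exp (- (a / 2)))
        = (1 + (-1) ^ (x + y) * exp (- a)) / (2 * (1 + a))"
    unfolding \<kappa>_def using \<open>a \<ge> 0\<close> by (simp add: field_simps flip: exp_add)
  thus ?thesis
    using has_sum_parity_quadratic_exp_series[of "(-1) ^ (x + y)" \<kappa> 0 0 "a / 2"]
    unfolding cnj_bob_amp_mult_bob_amp a_def[symmetric] \<kappa>_def by (simp add: mult.assoc)
qed

lemma cnj_coh_amp_mult_coh_amp:
  fixes \<alpha> :: complex
  defines "r \<equiv> (norm (\<alpha> / of_real (sqrt 2)))\<^sup>2"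
  shows "cnj (coh_amp \<alpha> x y l) * coh_amp \<alpha> x y l
           = of_real ((r + real l)\<^sup>2 / r) * (cnj (bob_amp \<alpha> x y l) * bob_amp \<alpha> x y l)"
proof -
  define \<beta> where "\<beta> = \<alpha> / of_real (sqrt 2)"
  have "cnj \<beta> * \<beta> = of_real r"
    unfolding r_def \<beta>_def by (metis complex_norm_square mult.commute)
  hence factor: "cnj ((of_real r + of_nat l) / \<beta>) * ((of_real r + of_nat l) / \<beta>) = of_real ((r + real l)\<^sup>2 / r)"
    by (simp add: power2_eq_square)
  have "cnj (b * w) * (b * w) = cnj w * w * (cnj b * b)" for b w :: complex
    by (simp add: mult_ac)
  thus ?thesis
    unfolding coh_amp_def r_def[symmetric] unfolding \<beta>_def[symmetric] factor[symmetric] by (simp only:)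
qed

lemma has_sum_coh_amp_norm:
  assumes "\<alpha> \<noteq> 0"
  shows "((\<lambda>l. cnj (coh_amp \<alpha> x y l) * coh_amp \<alpha> x y l)
           has_sum of_real ((1 + 2 * (norm \<alpha>)\<^sup>2 - (-1) ^ (x + y) * exp (- (norm \<alpha>)\<^sup>2))
                             / (2 * (1 + (norm \<alpha>)\<^sup>2)))) UNIV"
proof -
  define r where "r = (norm (\<alpha> / of_real (sqrt 2)))\<^sup>2"
  define \<kappa> where "\<kappa> = exp (- r) / (2 * (1 + 2 * r))"
  have "r > 0" "(norm \<alpha>)\<^sup>2 = 2 * r"
    using assms unfolding r_def by (auto simp: norm_divide power_divide)
  have pointwise: "cnj (coh_amp \<alpha> x y l) * coh_amp \<alpha> x y l
          = of_real \<kappa> * of_real ((1 + (-1) ^ (x + y) * (-1) ^ l) * ((r + real l)\<^sup>2 / r * r ^ l / fact l))" for l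
  proof -
    have "(r + real l)\<^sup>2 / r * ((1 + (-1) ^ (x + y) * (-1) ^ l)
              * (exp (- (2 * r) / 2) / (2 * (1 + 2 * r))) * (2 * r / 2) ^ l / fact l)
          = \<kappa> * ((1 + (-1) ^ (x + y) * (-1) ^ l) * ((r + real l)\<^sup>2 / r * r ^ l / fact l))"
      unfolding \<kappa>_def using \<open>r > 0\<close> by (simp add: field_simps)
    thus ?thesis
      unfolding cnj_coh_amp_mult_coh_amp r_def[symmetric] cnj_bob_amp_mult_bob_amp \<open>(norm \<alpha>)\<^sup>2 = 2 * r\<close>
      by (simp only: of_real_mult[symmetric])
  qed
  have total: "\<kappa> * ((1 + 4 * r) * exp r - (-1) ^ (x + y) * exp (- r))
                   = (1 + 2 * (norm \<alpha>)\<^sup>2 - (-1) ^ (x + y) * exp (- (norm \<alpha>)\<^sup>2)) / (2 * (1 + (norm \<alpha>)\<^sup>2))"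
  proof -
    have e: "\<kappa> * exp r = 1 / (2 * (1 + 2 * r))" "\<kappa> * exp (- r) = exp (- (2 * r)) / (2 * (1 + 2 * r))"
      unfolding \<kappa>_def by (simp_all flip: exp_add)
    have "\<kappa> * ((1 + 4 * r) * exp r - (-1) ^ (x + y) * exp (- r))
            = (1 + 4 * r) * (\<kappa> * exp r) - (-1) ^ (x + y) * (\<kappa> * exp (- r))"
      by (simp add: algebra_simps)
    thus ?thesis
      unfolding e \<open>(norm \<alpha>)\<^sup>2 = 2 * r\<close> by (simp add: diff_divide_distrib)
  qed
  show ?thesis
    unfolding pointwise total[symmetric] of_real_mult[of \<kappa>]
    by (rule has_sum_cmult_right[OF has_sum_parity_shifted_square_exp_series[OF \<open>r > 0\<close>]])
qed

lemma bob_amp_eq_0: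
  assumes "odd (x + y + l)"
  shows "bob_amp \<alpha> x y l = 0"
proof -
  have "(-1::real) ^ x + (-1) ^ (y + l) = 0"
    using assms by (auto simp: minus_one_power_iff)
  thus ?thesis
    by (simp add: bob_amp_def)
qed

lemma apply_local_parity_even:
  "apply_local PA parity_even \<psi> (n, m) = (if even m then PA (\<lambda>n'. \<psi> (n', m)) n else 0)"
  by (simp add: apply_local_def parity_even_def)

lemma apply_local_parity_odd:
  "apply_local PA parity_odd \<psi> (n, m) = (if odd m then PA (\<lambda>n'. \<psi> (n', m)) n else 0)"
  by (simp add: apply_local_def parity_odd_def)

text \<open>Expectation of the rank-one projection onto \<open>p\<close> (tensored with the identity) in the state
  \<open>\<Sum>\<^sub>l |l\<rangle> \<otimes> (u\<^sub>l p + v\<^sub>l c)\<close>, for \<open>p\<close> a unit vector orthogonal to \<open>c\<close>.\<close>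
lemma has_sum_expectation_two_component:
  fixes p c u v :: "nat \<Rightarrow> complex"
  assumes "((\<lambda>j. cnj (p j) * p j) has_sum 1) UNIV" and "((\<lambda>j. cnj (c j) * p j) has_sum 0) UNIV"
    and "((\<lambda>l. cnj (u l) * u l) has_sum U) UNIV" and "(\<lambda>l. cnj (v l) * v l) summable_on UNIV"
  shows "((\<lambda>(j, l). cnj (u l * p j + v l * c j) * (u l * p j)) has_sum U) UNIV"
proof -
  have "(\<lambda>l. norm (cnj (u l) * u l)) summable_on UNIV" "(\<lambda>l. norm (cnj (v l) * v l)) summable_on UNIV"
    using has_sum_imp_summable[OF assms(3)] assms(4)
      summable_on_iff_abs_summable_on_complex[of "\<lambda>l. cnj (u l) * u l" UNIV]
      summable_on_iff_abs_summable_on_complex[of "\<lambda>l. cnj (v l) * v l" UNIV]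
    by simp_all
  hence "Infinite_Sum.abs_summable_on (\<lambda>l. cnj (v l) * cnj (v l)) UNIV"
    "Infinite_Sum.abs_summable_on (\<lambda>l. u l * u l) UNIV"
    by (simp_all add: norm_mult)
  hence "Infinite_Sum.abs_summable_on (\<lambda>l. cnj (v l) * u l) UNIV"
    by (rule abs_summable_product)
  then obtain V where "((\<lambda>l. cnj (v l) * u l) has_sum V) UNIV"
    using summable_on_iff_abs_summable_on_complex[of "\<lambda>l. cnj (v l) * u l" UNIV]
    by (auto simp: summable_on_def)
  hence "((\<lambda>x. (\<lambda>(j, l). (cnj (p j) * p j) * (cnj (u l) * u l)) x
               + (\<lambda>(j, l). (cnj (c j) * p j) * (cnj (v l) * u l)) x) has_sum 1 * U + 0 * V) (UNIV \<times> UNIV)"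
    using assms(1-3) by (intro has_sum_add has_sum_product) auto
  thus ?thesis
    by (simp add: case_prod_unfold algebra_simps)
qed

lemma prob_photon_added_parity_even:
  fixes \<alpha> :: complex
  defines "\<beta> \<equiv> \<alpha> / complex_of_real (sqrt 2)"
  assumes "\<alpha> \<noteq> 0" "is_proj PA" "PA (coh_perp \<beta>) = coh_perp \<beta>" "PA (coh \<beta>) = (\<lambda>_. 0)"
    and "even (x + y)"
  shows "prob PA parity_even (photon_added \<alpha>) x y
           = of_real ((1 + exp (- (norm \<alpha>)\<^sup>2)) / (2 * (1 + (norm \<alpha>)\<^sup>2)))"
proof -
  let ?\<Phi> = "beam_splitter (noon (photon_added \<alpha>) x y)"
  have "\<beta> \<noteq> 0"
    using assms(2) unfolding \<beta>_def by simp
  have l2: "l2vec (coh_perp \<beta>)" "l2vec (coh \<beta>)"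
    using has_sum_coh_perp_norm[OF \<open>\<beta> \<noteq> 0\<close>] has_sum_coh_norm by (auto intro: l2vec_if_has_sum_norm)
  have "apply_local PA parity_even ?\<Phi> (j, l) = bob_amp \<alpha> x y l * coh_perp \<beta> j" for j l
    using is_proj_linear_combination[OF assms(3) l2, of "bob_amp \<alpha> x y l" "coh_amp \<alpha> x y l"]
      assms(4-6) bob_amp_eq_0[of x y l \<alpha>]
    unfolding apply_local_parity_even beam_splitter_noon_photon_added[OF assms(2)] \<beta>_def
    by auto
  hence "(\<lambda>p. cnj (?\<Phi> p) * apply_local PA parity_even ?\<Phi> p)
           = (\<lambda>(j, l). cnj (bob_amp \<alpha> x y l * coh_perp \<beta> j + coh_amp \<alpha> x y l * coh \<beta> j)
                       * (bob_amp \<alpha> x y l * coh_perp \<beta> j))"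
    by (auto simp: beam_splitter_noon_photon_added[OF assms(2)] \<beta>_def)
  moreover have "((\<lambda>(j, l). cnj (bob_amp \<alpha> x y l * coh_perp \<beta> j + coh_amp \<alpha> x y l * coh \<beta> j)
                       * (bob_amp \<alpha> x y l * coh_perp \<beta> j))
                   has_sum of_real ((1 + exp (- (norm \<alpha>)\<^sup>2)) / (2 * (1 + (norm \<alpha>)\<^sup>2)))) UNIV"
    using has_sum_bob_amp_norm[of \<alpha> x y] has_sum_coh_amp_norm[OF assms(2), of x y] assms(6)
    by (intro has_sum_expectation_two_component has_sum_coh_perp_norm has_sum_coh_coh_perp \<open>\<beta> \<noteq> 0\<close>)
       (auto dest: has_sum_imp_summable)
  ultimately show ?thesis
    unfolding prob_def Let_def by (simp add: infsumI)
qed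

lemma prob_photon_added_parity_odd:
  fixes \<alpha> :: complex
  defines "\<beta> \<equiv> \<alpha> / complex_of_real (sqrt 2)"
  assumes "\<alpha> \<noteq> 0" "is_proj PA" "PA (coh \<beta>) = coh \<beta>" "PA (coh_perp \<beta>) = (\<lambda>_. 0)"
    and "odd (x + y)"
  shows "prob PA parity_odd (photon_added \<alpha>) x y
           = of_real ((1 + 2 * (norm \<alpha>)\<^sup>2 + exp (- (norm \<alpha>)\<^sup>2)) / (2 * (1 + (norm \<alpha>)\<^sup>2)))"
proof -
  let ?\<Phi> = "beam_splitter (noon (photon_added \<alpha>) x y)"
  have "\<beta> \<noteq> 0"
    using assms(2) unfolding \<beta>_def by simp
  have l2: "l2vec (coh_perp \<beta>)" "l2vec (coh \<beta>)"
    using has_sum_coh_perp_norm[OF \<open>\<beta> \<noteq> 0\<close>] has_sum_coh_norm by (auto intro: l2vec_if_has_sum_norm)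
  have "apply_local PA parity_odd ?\<Phi> (j, l) = coh_amp \<alpha> x y l * coh \<beta> j" for j l
    using is_proj_linear_combination[OF assms(3) l2, of "bob_amp \<alpha> x y l" "coh_amp \<alpha> x y l"]
      assms(4-6) bob_amp_eq_0[of x y l \<alpha>]
    unfolding apply_local_parity_odd beam_splitter_noon_photon_added[OF assms(2)] \<beta>_def
    by (auto simp: coh_amp_def)
  hence "(\<lambda>p. cnj (?\<Phi> p) * apply_local PA parity_odd ?\<Phi> p)
           = (\<lambda>(j, l). cnj (coh_amp \<alpha> x y l * coh \<beta> j + bob_amp \<alpha> x y l * coh_perp \<beta> j)
                       * (coh_amp \<alpha> x y l * coh \<beta> j))"
    by (auto simp: beam_splitter_noon_photon_added[OF assms(2)] \<beta>_def add.commute)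
  moreover have "((\<lambda>(j, l). cnj (coh_amp \<alpha> x y l * coh \<beta> j + bob_amp \<alpha> x y l * coh_perp \<beta> j)
                       * (coh_amp \<alpha> x y l * coh \<beta> j))
                   has_sum of_real ((1 + 2 * (norm \<alpha>)\<^sup>2 + exp (- (norm \<alpha>)\<^sup>2)) / (2 * (1 + (norm \<alpha>)\<^sup>2)))) UNIV"
    using has_sum_bob_amp_norm[of \<alpha> x y] has_sum_coh_amp_norm[OF assms(2), of x y] assms(6)
    by (intro has_sum_expectation_two_component has_sum_coh_norm has_sum_coh_perp_coh \<open>\<beta> \<noteq> 0\<close>)
       (auto dest: has_sum_imp_summable)
  ultimately show ?thesis
    unfolding prob_def Let_def by (simp add: infsumI)
qed

theorem mainTheorem4:
  fixes \<alpha> :: complex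
    and PA0 PA1 :: "(nat \<Rightarrow> complex) \<Rightarrow> (nat \<Rightarrow> complex)"
  assumes "\<alpha> \<noteq> 0"
    and "two_outcome_pvm PA0 PA1"
    and "PA1 (coh (\<alpha> / complex_of_real (sqrt 2))) = coh (\<alpha> / complex_of_real (sqrt 2))"
    and "PA0 (\<lambda>n. create (coh (\<alpha> / complex_of_real (sqrt 2))) n
                 - cnj (\<alpha> / complex_of_real (sqrt 2)) * coh (\<alpha> / complex_of_real (sqrt 2)) n)
         = (\<lambda>n. create (coh (\<alpha> / complex_of_real (sqrt 2))) n
                 - cnj (\<alpha> / complex_of_real (sqrt 2)) * coh (\<alpha> / complex_of_real (sqrt 2)) n)"
  shows "prob PA0 parity_even (photon_added \<alpha>) 0 0
           = complex_of_real ((1 + exp (- (norm \<alpha> ^ 2))) / (2 * (1 + (norm \<alpha>)^2)))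
       \<and> prob PA0 parity_even (photon_added \<alpha>) 1 1
           = complex_of_real ((1 + exp (- (norm \<alpha> ^ 2))) / (2 * (1 + (norm \<alpha>)^2)))
       \<and> prob PA1 parity_odd (photon_added \<alpha>) 0 1
           = complex_of_real ((1 + 2 * (norm \<alpha>)^2 + exp (- (norm \<alpha> ^ 2))) / (2 * (1 + (norm \<alpha>)^2)))
       \<and> prob PA1 parity_odd (photon_added \<alpha>) 1 0
           = complex_of_real ((1 + 2 * (norm \<alpha>)^2 + exp (- (norm \<alpha> ^ 2))) / (2 * (1 + (norm \<alpha>)^2)))
       \<and> J_val PA0 PA1 parity_even parity_odd (photon_added \<alpha>)
           = complex_of_real (1/2 + exp (- (norm \<alpha> ^ 2)) / (2 * (1 + (norm \<alpha>)^2)))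
       \<and> 1/2 + exp (- (norm \<alpha> ^ 2)) / (2 * (1 + (norm \<alpha>)^2)) > (1/2 :: real)"
proof -
  let ?\<beta> = "\<alpha> / complex_of_real (sqrt 2)"
  have "?\<beta> \<noteq> 0"
    using assms(1) by simp
  hence "l2vec (coh ?\<beta>)" "l2vec (coh_perp ?\<beta>)"
    using has_sum_coh_norm has_sum_coh_perp_norm[OF \<open>?\<beta> \<noteq> 0\<close>] by (auto intro: l2vec_if_has_sum_norm)
  have proj: "is_proj PA0" "is_proj PA1"
    using assms(2) unfolding two_outcome_pvm_def by auto
  have keep: "PA0 (coh_perp ?\<beta>) = coh_perp ?\<beta>" "PA1 (coh ?\<beta>) = coh ?\<beta>"
    using assms(4,3) unfolding coh_perp_def .
  hence kill: "PA0 (coh ?\<beta>) = (\<lambda>_. 0)" "PA1 (coh_perp ?\<beta>) = (\<lambda>_. 0)"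
    using two_outcome_pvm_complement[OF assms(2)] \<open>l2vec (coh ?\<beta>)\<close> \<open>l2vec (coh_perp ?\<beta>)\<close> by blast+
  define p_even p_odd where "p_even = (1 + exp (- (norm \<alpha>)\<^sup>2)) / (2 * (1 + (norm \<alpha>)\<^sup>2))"
    and "p_odd = (1 + 2 * (norm \<alpha>)\<^sup>2 + exp (- (norm \<alpha>)\<^sup>2)) / (2 * (1 + (norm \<alpha>)\<^sup>2))"
  have probs: "prob PA0 parity_even (photon_added \<alpha>) 0 0 = of_real p_even"
    "prob PA0 parity_even (photon_added \<alpha>) 1 1 = of_real p_even"
    "prob PA1 parity_odd (photon_added \<alpha>) 0 1 = of_real p_odd"
    "prob PA1 parity_odd (photon_added \<alpha>) 1 0 = of_real p_odd"
    using prob_photon_added_parity_even[OF assms(1) proj(1) keep(1) kill(1)]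
      prob_photon_added_parity_odd[OF assms(1) proj(2) keep(2) kill(2)]
    unfolding p_even_def p_odd_def by simp_all
  have "1 + (norm \<alpha>)\<^sup>2 > 0"
    by (simp add: add_pos_nonneg)
  hence J_value: "(p_even + p_even + p_odd + p_odd) / 4 = 1 / 2 + exp (- (norm \<alpha>)\<^sup>2) / (2 * (1 + (norm \<alpha>)\<^sup>2))"
    unfolding p_even_def p_odd_def by (simp add: divide_simps) (simp add: algebra_simps)
  have "J_val PA0 PA1 parity_even parity_odd (photon_added \<alpha>)
          = of_real (1 / 2 + exp (- (norm \<alpha>)\<^sup>2) / (2 * (1 + (norm \<alpha>)\<^sup>2)))"
    unfolding J_val_def probs J_value[symmetric] by simp
  with probs \<open>1 + (norm \<alpha>)\<^sup>2 > 0\<close> show ?thesis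
    unfolding p_even_def[symmetric] p_odd_def[symmetric] by simp
qed

end
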